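(* Let $T\in\mathcal{L}(\mathcal{H})$ have closed range and let $n\ge1$ be such that $T^n$ has closed range. (1) If $T^n$ is EP, then $T$ is $n$-EP. (2) If $T$ is SD, then $T$ is $n$-EP if and only if $T^n$ is EP.
   Context: $\mathcal{H}$ is a Hilbert space, $\mathcal{L}(\mathcal{H})$ the bounded operators on it. For $A$ with closed range, $A^\dagger$ is its Moore–Penrose inverse (unique solution of $AA^\dagger A=A$, $A^\dagger AA^\dagger=A^\dagger$, $(A^\dagger A)^*=A^\dagger A$, $(AA^\dagger)^*=AA^\dagger$). $A$ is EP if it has closed range and $R(A)=R(A^* )$ (equivalently $AA^\dagger=A^\dagger A$). $T$ is SD if it has closed range and $T^*T^\dagger=T^\dagger T^*$. For $n\ge1$, $T$ is $n$-EP if $T$ has closed range and $T^nT^\dagger=T^\dagger T^n$. *)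

theory Defs
  imports "HOL-Analysis.Analysis"
begin

(* Bounded operators on a (real) Hilbert space are modelled as blinfuns. *)

definition closed_range :: "('a::real_normed_vector \<Rightarrow>\<^sub>L 'a) \<Rightarrow> bool" where
  "closed_range A \<longleftrightarrow> closed (range (blinfun_apply A))"

definition opow :: "('a::real_normed_vector \<Rightarrow>\<^sub>L 'a) \<Rightarrow> nat \<Rightarrow> ('a \<Rightarrow>\<^sub>L 'a)" where
  "opow A n = ((\<lambda>B. A o\<^sub>L B) ^^ n) id_blinfun"

definition is_adjoint :: "('a::real_inner \<Rightarrow>\<^sub>L 'a) \<Rightarrow> ('a \<Rightarrow>\<^sub>L 'a) \<Rightarrow> bool" where
  "is_adjoint A S \<longleftrightarrow> (\<forall>x y. inner (A x) y = inner x (S y))"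

definition adj :: "('a::real_inner \<Rightarrow>\<^sub>L 'a) \<Rightarrow> ('a \<Rightarrow>\<^sub>L 'a)" where
  "adj A = (THE S. is_adjoint A S)"

definition is_mp_inverse :: "('a::real_inner \<Rightarrow>\<^sub>L 'a) \<Rightarrow> ('a \<Rightarrow>\<^sub>L 'a) \<Rightarrow> bool" where
  "is_mp_inverse A B \<longleftrightarrow>
     A o\<^sub>L B o\<^sub>L A = A \<and> B o\<^sub>L A o\<^sub>L B = B \<and>
     adj (B o\<^sub>L A) = B o\<^sub>L A \<and> adj (A o\<^sub>L B) = A o\<^sub>L B"

definition mp :: "('a::real_inner \<Rightarrow>\<^sub>L 'a) \<Rightarrow> ('a \<Rightarrow>\<^sub>L 'a)" where
  "mp A = (THE B. is_mp_inverse A B)"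

definition is_EP :: "('a::real_inner \<Rightarrow>\<^sub>L 'a) \<Rightarrow> bool" where
  "is_EP A \<longleftrightarrow> closed_range A \<and> range (blinfun_apply A) = range (blinfun_apply (adj A))"

definition is_SD :: "('a::real_inner \<Rightarrow>\<^sub>L 'a) \<Rightarrow> bool" where
  "is_SD T \<longleftrightarrow> closed_range T \<and> adj T o\<^sub>L mp T = mp T o\<^sub>L adj T"

definition is_nEP :: "nat \<Rightarrow> ('a::real_inner \<Rightarrow>\<^sub>L 'a) \<Rightarrow> bool" where
  "is_nEP n T \<longleftrightarrow> closed_range T \<and> opow T n o\<^sub>L mp T = mp T o\<^sub>L opow T n"

end

theory Submission
  imports Defs
begin

text \<open>
  The Moore-Penrose inverse \<open>A\<^sup>\<dagger>\<close> of a closed-range operator is assembled from the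
  orthogonal projections onto \<open>R(A)\<close> and onto \<open>N(A)\<^sup>\<bottom>\<close>; it is bounded by the bounded
  inverse theorem (via Baire), and adjoints exist by the Riesz representation theorem.

  Write \<open>S = T\<^sup>n\<close>. Since \<open>T T\<^sup>\<dagger> T = T\<close>, the identity \<open>S T\<^sup>\<dagger> = T\<^sup>\<dagger> S\<close> holds iff
  \<open>T\<^sup>\<dagger> T S = S\<close> and \<open>S T T\<^sup>\<dagger> = S\<close>, i.e. iff \<open>R(S) \<subseteq> R(T\<^sup>*)\<close> and \<open>N(T\<^sup>*) \<subseteq> N(S)\<close>.
  If \<open>S\<close> is EP, then \<open>R(S) = R(S\<^sup>*) \<subseteq> R(T\<^sup>*)\<close> and \<open>N(T\<^sup>*) \<subseteq> N(S\<^sup>*) = N(S)\<close>, so \<open>T\<close>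
  is \<open>n\<close>-EP. Conversely, if \<open>T\<close> is SD, taking adjoints in \<open>T T\<^sup>* T\<^sup>\<dagger> T = T T\<^sup>\<dagger> T\<^sup>* T\<close>
  gives \<open>T\<^sup>\<dagger> T T T\<^sup>* = T\<^sup>* T T T\<^sup>\<dagger>\<close>, whence \<open>T (T T\<^sup>*) = (T T\<^sup>*) T T T\<^sup>\<dagger>\<close>.
  Iterating and using \<open>S T T\<^sup>\<dagger> = S\<close>, \<open>S\<close> commutes with \<open>T T\<^sup>*\<close>; then
  \<open>T\<^sup>* S - S T\<^sup>* = T\<^sup>\<dagger> T (T\<^sup>* S - S T\<^sup>*) = T\<^sup>\<dagger> (T T\<^sup>* S - S T T\<^sup>*) = 0\<close>,
  so \<open>S\<close> is normal and hence EP.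
\<close>

section \<open>Orthogonal projections and adjoints\<close>

lemma vector_eq_ldotI: "(\<And>z. inner z x = inner z y) \<Longrightarrow> x = y"
  using vector_eq_ldot by blast

lemma vector_eq_rdotI: "(\<And>z. inner x z = inner y z) \<Longrightarrow> x = y"
  using vector_eq_rdot by blast

lemma orthogonal_compD: "x \<in> W\<^sup>\<bottom> \<Longrightarrow> w \<in> W \<Longrightarrow> inner w x = 0"
  by (simp add: orthogonal_comp_def orthogonal_def)

lemma closed_kernel_bounded_linear: "bounded_linear f \<Longrightarrow> closed {x. f x = 0}"
  by (intro closed_Collect_eq linear_continuous_on continuous_on_const)

lemma parallelogram_law:
  fixes a b :: "'a::real_inner"
  shows "(norm (a + b))\<^sup>2 + (norm (a - b))\<^sup>2 = 2 * (norm a)\<^sup>2 + 2 * (norm b)\<^sup>2"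
  by (simp add: power2_norm_eq_inner inner_add_left inner_add_right inner_diff_left inner_diff_right
      inner_commute)

lemma convex_midpoint_dist_bound:
  fixes S :: "'a::real_inner set"
  assumes "convex S" "y \<in> S" "z \<in> S"
  shows "(norm (y - z))\<^sup>2 \<le> 2 * (norm (x - y))\<^sup>2 + 2 * (norm (x - z))\<^sup>2 - 4 * (infdist x S)\<^sup>2"
proof -
  have "midpoint y z \<in> S"
    using convexD[OF assms, of "1/2" "1/2"] by (simp add: midpoint_def scaleR_right_distrib)
  then have "infdist x S \<le> norm (x - midpoint y z)"
    using infdist_le by (metis dist_norm)
  then have "(infdist x S)\<^sup>2 \<le> (norm (x - midpoint y z))\<^sup>2"
    by (rule power_mono) (rule infdist_nonneg)
  moreover have "(x - y) + (x - z) = 2 *\<^sub>R (x - midpoint y z)" "(x - y) - (x - z) = z - y"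
    by (simp_all add: midpoint_def algebra_simps scaleR_2)
  ultimately show ?thesis
    using parallelogram_law[of "x - y" "x - z"] by (simp add: norm_minus_commute power2_eq_square)
qed

lemma convex_minimizing_sequence_Cauchy:
  fixes S :: "'a::real_inner set"
  assumes "convex S" and s_in: "\<And>k. s k \<in> S"
    and lim: "(\<lambda>k. norm (x - s k)) \<longlonglongrightarrow> infdist x S"
  shows "Cauchy s"
proof (rule metric_CauchyI)
  fix e :: real assume "e > 0"
  define d where "d = infdist x S"
  have "(\<lambda>k. (norm (x - s k))\<^sup>2) \<longlonglongrightarrow> d\<^sup>2"
    unfolding d_def by (intro tendsto_intros lim)
  moreover have "d\<^sup>2 < d\<^sup>2 + e\<^sup>2 / 4"
    using \<open>e > 0\<close> by simp
  ultimately have "\<forall>\<^sub>F k in sequentially. (norm (x - s k))\<^sup>2 < d\<^sup>2 + e\<^sup>2 / 4"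
    by (rule order_tendstoD(2))
  then obtain N where N: "\<And>k. k \<ge> N \<Longrightarrow> (norm (x - s k))\<^sup>2 < d\<^sup>2 + e\<^sup>2 / 4"
    unfolding eventually_sequentially by blast
  have "dist (s j) (s k) < e" if "j \<ge> N" "k \<ge> N" for j k
  proof -
    have "(norm (s j - s k))\<^sup>2 < e\<^sup>2"
      using convex_midpoint_dist_bound[OF assms(1) s_in s_in, of j k x] N[OF that(1)] N[OF that(2)]
      by (simp add: d_def)
    then show ?thesis
      using \<open>e > 0\<close> by (simp add: dist_norm power_less_imp_less_base)
  qed
  then show "\<exists>N. \<forall>j\<ge>N. \<forall>k\<ge>N. dist (s j) (s k) < e"
    by blast
qed

lemma convex_closest_point_exists:
  fixes S :: "'a::{real_inner,complete_space} set"
  assumes "closed S" "convex S" "S \<noteq> {}"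
  obtains m where "m \<in> S" "\<And>y. y \<in> S \<Longrightarrow> norm (x - m) \<le> norm (x - y)"
proof -
  define d where "d = infdist x S"
  have d_le: "d \<le> norm (x - y)" if "y \<in> S" for y
    using infdist_le[OF that, of x] by (simp add: d_def dist_norm)
  have "\<exists>y\<in>S. norm (x - y) < d + inverse (Suc k)" for k
  proof -
    have "Inf ((\<lambda>y. dist x y) ` S) < d + inverse (Suc k)"
      using infdist_notempty[OF assms(3)] by (simp add: d_def)
    then show ?thesis
      using cInf_lessD[of "(\<lambda>y. dist x y) ` S"] assms(3) by (auto simp: dist_norm)
  qed
  then obtain s where s_in: "\<And>k. s k \<in> S"
    and s_close: "\<And>k. norm (x - s k) < d + inverse (Suc k)"
    by metis
  have dist_lim: "(\<lambda>k. norm (x - s k)) \<longlonglongrightarrow> d"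
  proof (rule tendsto_sandwich[of "\<lambda>_. d" _ _ "\<lambda>k. d + inverse (Suc k)"])
    show "\<forall>\<^sub>F k in sequentially. d \<le> norm (x - s k)"
      using d_le s_in by simp
    show "\<forall>\<^sub>F k in sequentially. norm (x - s k) \<le> d + inverse (Suc k)"
      by (intro always_eventually allI less_imp_le s_close)
    show "(\<lambda>k. d + inverse (real (Suc k))) \<longlonglongrightarrow> d"
      using LIMSEQ_inverse_real_of_nat_add[of d] by simp
  qed simp
  have "Cauchy s"
    using assms(2) s_in dist_lim unfolding d_def by (rule convex_minimizing_sequence_Cauchy)
  moreover have "complete S"
    using assms(1) complete_eq_closed by blast
  ultimately obtain m where "m \<in> S" and lim: "s \<longlonglongrightarrow> m"
    using s_in completeE by blast
  moreover have "(\<lambda>k. norm (x - s k)) \<longlonglongrightarrow> norm (x - m)"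
    by (intro tendsto_intros lim)
  then have "norm (x - m) = d"
    using dist_lim LIMSEQ_unique by blast
  ultimately show thesis
    using that d_le by simp
qed

lemma subspace_closest_point_orthogonal:
  fixes M :: "'a::real_inner set"
  assumes "subspace M" "m \<in> M" "y \<in> M"
    and closest: "\<And>y. y \<in> M \<Longrightarrow> norm (x - m) \<le> norm (x - y)"
  shows "inner (x - m) y = 0"
proof (cases "y = 0")
  case False
  define a where "a = x - m"
  define c where "c = inner a y"
  define t where "t = c / (norm y)\<^sup>2"
  have "m + t *\<^sub>R y \<in> M"
    using assms by (simp add: subspace_add subspace_scale)
  then have "norm a \<le> norm (a - t *\<^sub>R y)"
    using closest by (simp add: a_def algebra_simps)
  then have "(norm a)\<^sup>2 \<le> (norm (a - t *\<^sub>R y))\<^sup>2"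
    by (simp add: power_mono)
  also have "\<dots> = (norm a)\<^sup>2 - 2 * t * c + t\<^sup>2 * (norm y)\<^sup>2"
    unfolding power2_norm_eq_inner
    by (simp add: inner_diff_left inner_diff_right inner_commute c_def power2_eq_square algebra_simps)
  also have "\<dots> = (norm a)\<^sup>2 - c\<^sup>2 / (norm y)\<^sup>2"
    using False by (simp add: t_def field_simps power2_eq_square)
  finally have "c\<^sup>2 / (norm y)\<^sup>2 \<le> 0"
    by simp
  then show ?thesis
    using False by (simp add: a_def c_def divide_le_0_iff)
qed simp

lemma orthogonal_projection_exists:
  fixes M :: "'a::{real_inner,complete_space} set"
  assumes "closed M" "subspace M"
  obtains m where "m \<in> M" "\<And>y. y \<in> M \<Longrightarrow> inner (x - m) y = 0"
proof -
  obtain m where "m \<in> M" "\<And>y. y \<in> M \<Longrightarrow> norm (x - m) \<le> norm (x - y)"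
    using convex_closest_point_exists[OF assms(1) subspace_imp_convex[OF assms(2)]]
      subspace_0[OF assms(2)] by blast
  then show thesis
    using that subspace_closest_point_orthogonal[OF assms(2)] by blast
qed

lemma riesz_representation:
  fixes f :: "'a::{real_inner,complete_space} \<Rightarrow> real"
  assumes "bounded_linear f"
  obtains z where "\<And>x. f x = inner x z"
proof (cases "\<forall>x. f x = 0")
  case True
  then show thesis
    using that[of 0] by simp
next
  case False
  then obtain u where "f u \<noteq> 0"
    by blast
  have lin: "linear f"
    using assms bounded_linear.linear by blast
  obtain p where p: "p \<in> {x. f x = 0}" "\<And>y. y \<in> {x. f x = 0} \<Longrightarrow> inner (u - p) y = 0"
    using closed_kernel_bounded_linear[OF assms] linear_subspace_kernel[OF lin]
    by (rule orthogonal_projection_exists[where x = u]) blast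
  define w where "w = u - p"
  have fw: "f w \<noteq> 0"
    using \<open>f u \<noteq> 0\<close> p(1) lin by (simp add: w_def linear_diff)
  show thesis
  proof (rule that[of "(f w / inner w w) *\<^sub>R w"])
    fix x
    have "f (x - (f x / f w) *\<^sub>R w) = 0"
      using fw lin by (simp add: linear_diff linear_scale)
    then have "inner w (x - (f x / f w) *\<^sub>R w) = 0"
      using p(2) by (simp add: w_def)
    then have "inner x w = (f x / f w) * inner w w"
      by (simp add: inner_diff_right inner_commute)
    moreover have "inner w w \<noteq> 0"
      using fw lin linear_0 by force
    ultimately show "f x = inner x ((f w / inner w w) *\<^sub>R w)"
      using fw by simp
  qed
qed

lemma adjoint_exists:
  fixes A :: "'a::{real_inner,complete_space} \<Rightarrow>\<^sub>L 'a"
  shows "\<exists>S. is_adjoint A S"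
proof -
  have "\<exists>z. \<forall>x. inner (A x) y = inner x z" for y
  proof -
    have "bounded_linear (\<lambda>x. inner (A x) y)"
      by (rule bounded_linear_compose[OF bounded_linear_inner_left blinfun.bounded_linear_right])
    then obtain z where "\<And>x. inner (A x) y = inner x z"
      by (rule riesz_representation) blast
    then show ?thesis
      by blast
  qed
  then obtain g where g: "\<And>x y. inner (A x) y = inner x (g y)"
    by metis
  have add: "g (a + b) = g a + g b" for a b
    by (rule vector_eq_ldotI) (simp add: inner_add_right flip: g)
  have scale: "g (r *\<^sub>R a) = r *\<^sub>R g a" for r a
    by (rule vector_eq_ldotI) (simp flip: g)
  have bound: "norm (g y) \<le> norm y * norm A" for y
  proof -
    have "norm (g y) * norm (g y) = inner (A (g y)) y"
      by (simp add: g flip: power2_eq_square power2_norm_eq_inner)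
    also have "\<dots> \<le> norm (A (g y)) * norm y"
      by (rule norm_cauchy_schwarz)
    also have "\<dots> \<le> norm A * norm (g y) * norm y"
      by (simp add: mult_right_mono norm_blinfun)
    finally show ?thesis
      by (cases "g y = 0") (simp_all add: mult.commute)
  qed
  have "bounded_linear g"
    by (rule bounded_linear_intro[OF add scale bound])
  then show ?thesis
    by (intro exI[of _ "Blinfun g"]) (simp add: is_adjoint_def bounded_linear_Blinfun_apply g)
qed

lemma adjoint_unique:
  fixes A :: "'a::real_inner \<Rightarrow>\<^sub>L 'a"
  assumes "is_adjoint A S" "is_adjoint A S'"
  shows "S = S'"
proof (rule blinfun_eqI, rule vector_eq_ldotI)
  show "inner x (S y) = inner x (S' y)" for x y
    using assms unfolding is_adjoint_def by metis
qed

lemma adj_eqI: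
  fixes A :: "'a::{real_inner,complete_space} \<Rightarrow>\<^sub>L 'a"
  assumes "is_adjoint A S"
  shows "adj A = S"
  unfolding adj_def using assms by (rule the_equality) (rule adjoint_unique[OF _ assms])

lemma inner_adj_right: "inner (A x) y = inner x (adj A y)"
  for A :: "'a::{real_inner,complete_space} \<Rightarrow>\<^sub>L 'a"
proof -
  obtain S where S: "is_adjoint A S"
    using adjoint_exists by blast
  then have "adj A = S"
    by (rule adj_eqI)
  with S show ?thesis
    by (simp add: is_adjoint_def)
qed

lemma inner_adj_left: "inner (adj A x) y = inner x (A y)"
  for A :: "'a::{real_inner,complete_space} \<Rightarrow>\<^sub>L 'a"
  by (metis inner_commute inner_adj_right)

lemma adj_adj [simp]: "adj (adj A) = A"
  for A :: "'a::{real_inner,complete_space} \<Rightarrow>\<^sub>L 'a"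
  by (rule adj_eqI) (simp add: is_adjoint_def inner_adj_left)

lemma adj_compose: "adj (A o\<^sub>L B) = adj B o\<^sub>L adj A"
  for A B :: "'a::{real_inner,complete_space} \<Rightarrow>\<^sub>L 'a"
  by (rule adj_eqI) (simp add: is_adjoint_def inner_adj_right)

lemma adj_id [simp]: "adj (id_blinfun :: 'a::{real_inner,complete_space} \<Rightarrow>\<^sub>L 'a) = id_blinfun"
  by (rule adj_eqI) (simp add: is_adjoint_def)

lemma adj_orthogonal_projection:
  fixes P :: "'a::{real_inner,complete_space} \<Rightarrow>\<^sub>L 'a"
  assumes "\<And>x y. inner (P x) y = inner (P x) (P y)"
  shows "adj P = P"
proof (rule adj_eqI)
  show "is_adjoint P P"
    unfolding is_adjoint_def by (metis assms inner_commute)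
qed

lemma blinfun_eq_iff: "F = G \<longleftrightarrow> (\<forall>x. blinfun_apply F x = blinfun_apply G x)"
  by (auto intro: blinfun_eqI)

lemma blinfun_compose_assoc: "(A o\<^sub>L B) o\<^sub>L C = A o\<^sub>L (B o\<^sub>L C)"
  by (rule blinfun_eqI) simp

section \<open>Bounded inverse on a closed range\<close>

lemma subspace_range_blinfun: "subspace (range (blinfun_apply A))"
  by (simp add: linear_subspace_image blinfun.bounded_linear_right bounded_linear.linear)

lemma subspace_kernel_blinfun: "subspace {x. blinfun_apply A x = 0}"
  by (simp add: linear_subspace_kernel blinfun.bounded_linear_right bounded_linear.linear)

lemma closed_range_ball_in_closure_image:
  fixes A :: "'a::real_normed_vector \<Rightarrow>\<^sub>L 'b::{real_normed_vector,complete_space}"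
  assumes "closed (range A)"
  obtains k y0 r where "k \<ge> 0" "r > 0" "y0 \<in> range A"
    "range A \<inter> ball y0 r \<subseteq> closure (A ` cball 0 k)"
proof -
  let ?X = "top_of_set (range A)"
  define F where "F k = range A \<inter> closure (A ` cball 0 (real k))" for k
  have Un_F: "\<Union>(range F) = range A"
  proof (intro equalityI subsetI)
    fix y assume "y \<in> range A"
    then obtain x where x: "y = A x"
      by blast
    obtain k :: nat where "norm x \<le> real k"
      using real_arch_simple by blast
    then have "y \<in> F k"
      unfolding F_def using x closure_subset by fastforce
    then show "y \<in> \<Union>(range F)"
      by blast
  qed (auto simp: F_def)
  have complete_X: "completely_metrizable_space ?X"
    using assms closed_closedin
    by (blast intro: completely_metrizable_space_closedin completely_metrizable_space_euclidean)
  have "\<exists>k. ?X interior_of F k \<noteq> {}"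
  proof (rule ccontr)
    assume "\<nexists>k. ?X interior_of F k \<noteq> {}"
    then have "?X interior_of \<Union>(range F) = {}"
      using complete_X by (intro Baire_category_alt) (auto simp: F_def closedin_closed_Int)
    then show False
      using Un_F interior_of_topspace[of ?X] by simp
  qed
  then obtain k y0 where "y0 \<in> ?X interior_of F k"
    by blast
  then obtain V where V: "open V" "y0 \<in> range A \<inter> V" "range A \<inter> V \<subseteq> F k"
    unfolding interior_of_def openin_open by blast
  then obtain r where "r > 0" "ball y0 r \<subseteq> V"
    using open_contains_ball by blast
  show thesis
  proof (rule that)
    show "range A \<inter> ball y0 r \<subseteq> closure (A ` cball 0 (real k))"
      using V \<open>ball y0 r \<subseteq> V\<close> by (auto simp: F_def)
  qed (use \<open>r > 0\<close> V in auto)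
qed

lemma closed_range_local_approx_preimage:
  fixes A :: "'a::real_normed_vector \<Rightarrow>\<^sub>L 'b::{real_normed_vector,complete_space}"
  assumes "closed (range A)"
  obtains k r where "k \<ge> 0" "r > 0"
    "\<And>y e. y \<in> range A \<Longrightarrow> norm y < r \<Longrightarrow> e > 0 \<Longrightarrow> \<exists>x. norm x \<le> 2 * k \<and> norm (y - A x) < e"
proof -
  obtain k y0 r where k: "k \<ge> 0" and r: "r > 0" and y0: "y0 \<in> range A"
    and ball_sub: "range A \<inter> ball y0 r \<subseteq> closure (A ` cball 0 k)"
    by (rule closed_range_ball_in_closure_image[OF assms])
  have near: "\<exists>a. norm a \<le> k \<and> norm (A a - z) < e"
    if "z \<in> range A" "dist y0 z < r" "e > 0" for z e
  proof -
    have "z \<in> closure (A ` cball 0 k)"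
      using ball_sub that by auto
    then obtain a where "a \<in> cball 0 k" "dist (A a) z < e"
      using closure_approachable \<open>e > 0\<close> by blast
    then show ?thesis
      by (auto simp: dist_norm)
  qed
  have "\<exists>x. norm x \<le> 2 * k \<and> norm (y - A x) < e"
    if y: "y \<in> range A" and small: "norm y < r" and e: "e > 0" for y e
  proof -
    have "y0 + y \<in> range A"
      using subspace_range_blinfun y0 y by (rule subspace_add)
    then obtain a1 where a1: "norm a1 \<le> k" "norm (A a1 - (y0 + y)) < e / 2"
      using near[of "y0 + y" "e / 2"] small e by (auto simp: dist_norm)
    obtain a2 where a2: "norm a2 \<le> k" "norm (A a2 - y0) < e / 2"
      using near[of y0 "e / 2"] y0 r e by auto
    have "y - A (a1 - a2) = (A a2 - y0) - (A a1 - (y0 + y))"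
      by (simp add: blinfun.diff_right)
    then have "norm (y - A (a1 - a2)) \<le> norm (A a2 - y0) + norm (A a1 - (y0 + y))"
      by (metis norm_triangle_ineq4)
    then have "norm (y - A (a1 - a2)) < e"
      using a1(2) a2(2) by linarith
    moreover have "norm (a1 - a2) \<le> 2 * k"
      using a1(1) a2(1) norm_triangle_ineq4[of a1 a2] by simp
    ultimately show ?thesis
      by blast
  qed
  with k r show thesis
    by (rule that)
qed

lemma closed_range_approx_preimage:
  fixes A :: "'a::real_normed_vector \<Rightarrow>\<^sub>L 'b::{real_normed_vector,complete_space}"
  assumes "closed (range A)"
  obtains K where "K \<ge> 0"
    "\<And>y e. y \<in> range A \<Longrightarrow> e > 0 \<Longrightarrow> \<exists>x. norm x \<le> K * norm y \<and> norm (y - A x) < e"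
proof -
  obtain k r where k: "k \<ge> 0" and r: "r > 0" and local: "\<And>y e. y \<in> range A \<Longrightarrow> norm y < r \<Longrightarrow>
      e > 0 \<Longrightarrow> \<exists>x. norm x \<le> 2 * k \<and> norm (y - A x) < e"
    using closed_range_local_approx_preimage[OF assms] by blast
  show thesis
  proof (rule that[of "4 * k / r"])
    show "4 * k / r \<ge> 0"
      using k r by simp
  next
    fix y and e :: real assume "y \<in> range A" "e > 0"
    show "\<exists>x. norm x \<le> 4 * k / r * norm y \<and> norm (y - A x) < e"
    proof (cases "y = 0")
      case True
      then show ?thesis
        using \<open>e > 0\<close> by (intro exI[of _ 0]) simp
    next
      case False
      define s where "s = r / (2 * norm y)"
      have s: "s > 0" "norm (s *\<^sub>R y) < r"
        using False r by (simp_all add: s_def)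
      have "s *\<^sub>R y \<in> range A"
        using subspace_range_blinfun \<open>y \<in> range A\<close> by (rule subspace_scale)
      then obtain x where x: "norm x \<le> 2 * k" "norm (s *\<^sub>R y - A x) < e * s"
        using local[of "s *\<^sub>R y" "e * s"] s \<open>e > 0\<close> by auto
      show ?thesis
      proof (intro exI conjI)
        show "norm (x /\<^sub>R s) \<le> 4 * k / r * norm y"
          using x(1) s(1) False r by (simp add: s_def field_simps)
        have "y - A (x /\<^sub>R s) = (s *\<^sub>R y - A x) /\<^sub>R s"
          using s(1) by (simp add: blinfun.scaleR_right blinfun.diff_right algebra_simps)
        then have "norm (y - A (x /\<^sub>R s)) = norm (s *\<^sub>R y - A x) / s"
          using s(1) by (simp add: divide_inverse_commute)
        then show "norm (y - A (x /\<^sub>R s)) < e"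
          using x(2) s(1) by (simp add: pos_divide_less_eq)
      qed
    qed
  qed
qed

(* Copies of summable_norm_cancel and summable_norm, which are stated for the class banach; the
   sort {real_normed_vector, complete_space} used here does not entail that class. *)
lemma summable_norm_cancel_complete:
  fixes f :: "nat \<Rightarrow> 'a::{real_normed_vector,complete_space}"
  assumes "summable (\<lambda>n. norm (f n))"
  shows "summable f"
proof -
  have tail: "norm (sum f {..<n} - sum f {..<m}) \<le> norm (\<Sum>i\<in>{m..<n}. norm (f i))"
    if "m \<le> n" for m n
  proof -
    have "sum f {..<n} - sum f {..<m} = sum f {m..<n}"
      using sum_diff_nat_ivl[OF le0 that, of f] by (simp add: atLeast0LessThan)
    then show ?thesis
      using norm_sum[of f "{m..<n}"] by (simp add: sum_nonneg)
  qed
  have "Cauchy (\<lambda>n. sum f {..<n})"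
  proof (rule CauchyI)
    fix e :: real assume "e > 0"
    then obtain N where N: "\<And>m n. m \<ge> N \<Longrightarrow> norm (\<Sum>i\<in>{m..<n}. norm (f i)) < e"
      using assms unfolding summable_Cauchy by blast
    have "norm (sum f {..<m} - sum f {..<n}) < e" if "m \<ge> N" "n \<ge> N" for m n
    proof (cases "m \<le> n")
      case True
      then show ?thesis
        using tail[of m n] N[of m n] that by (simp add: norm_minus_commute)
    next
      case False
      then show ?thesis
        using tail[of n m] N[of n m] that by simp
    qed
    then show "\<exists>N. \<forall>m\<ge>N. \<forall>n\<ge>N. norm (sum f {..<m} - sum f {..<n}) < e"
      by blast
  qed
  then show ?thesis
    by (simp add: summable_iff_convergent Cauchy_convergent_iff)
qed

lemma norm_suminf_le_complete:
  fixes f :: "nat \<Rightarrow> 'a::{real_normed_vector,complete_space}"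
  assumes "summable (\<lambda>n. norm (f n))"
  shows "norm (suminf f) \<le> (\<Sum>n. norm (f n))"
proof -
  have "(\<lambda>n. norm (sum f {..<n})) \<longlonglongrightarrow> norm (suminf f)"
    using summable_norm_cancel_complete[OF assms] by (intro tendsto_norm summable_LIMSEQ)
  moreover have "norm (sum f {..<n}) \<le> (\<Sum>i. norm (f i))" for n
  proof -
    have "norm (sum f {..<n}) \<le> (\<Sum>i<n. norm (f i))"
      by (rule norm_sum)
    also have "\<dots> \<le> (\<Sum>i. norm (f i))"
      using assms by (rule sum_le_suminf) simp_all
    finally show ?thesis .
  qed
  ultimately show ?thesis
    using LIMSEQ_le_const2 by blast
qed

lemma approx_preimage_iteration:
  fixes A :: "'a::real_normed_vector \<Rightarrow>\<^sub>L 'b::real_normed_vector"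
  assumes "K \<ge> 0"
    and approx: "\<forall>y\<in>range A. \<exists>x. norm x \<le> K * norm y \<and> norm (y - A x) \<le> norm y / 2"
    and "y \<in> range A"
  obtains ys xs where "ys 0 = y" "\<And>j. ys (Suc j) = ys j - A (xs j)"
    "\<And>j. norm (ys j) \<le> norm y * (1/2) ^ j" "\<And>j. norm (xs j) \<le> K * norm y * (1/2) ^ j"
proof -
  obtain f where f: "\<And>y. y \<in> range A \<Longrightarrow> norm (f y) \<le> K * norm y \<and> norm (y - A (f y)) \<le> norm y / 2"
    using approx by metis
  define ys where "ys j = ((\<lambda>z. z - A (f z)) ^^ j) y" for j
  define xs where "xs j = f (ys j)" for j
  have ys_Suc: "ys (Suc j) = ys j - A (xs j)" for j
    by (simp add: ys_def xs_def)
  have ys_range: "ys j \<in> range A" for j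
  proof (induction j)
    case 0
    then show ?case
      using \<open>y \<in> range A\<close> by (simp add: ys_def)
  next
    case (Suc j)
    then show ?case
      unfolding ys_Suc by (intro subspace_diff[OF subspace_range_blinfun] rangeI)
  qed
  have ys_bound: "norm (ys j) \<le> norm y * (1/2) ^ j" for j
  proof (induction j)
    case (Suc j)
    have "norm (ys (Suc j)) \<le> norm (ys j) / 2"
      using f[OF ys_range[of j]] by (simp add: ys_Suc xs_def)
    then show ?case
      using Suc by simp
  qed (simp add: ys_def)
  have xs_bound: "norm (xs j) \<le> K * norm y * (1/2) ^ j" for j
    using f[OF ys_range[of j]] mult_left_mono[OF ys_bound[of j] \<open>K \<ge> 0\<close>]
    by (simp add: xs_def mult.assoc)
  show thesis
    by (rule that[OF _ ys_Suc ys_bound xs_bound]) (simp add: ys_def)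
qed

lemma approx_preimage_imp_preimage:
  fixes A :: "'a::{real_normed_vector,complete_space} \<Rightarrow>\<^sub>L 'b::real_normed_vector"
  assumes "K \<ge> 0"
    and approx: "\<forall>y\<in>range A. \<exists>x. norm x \<le> K * norm y \<and> norm (y - A x) \<le> norm y / 2"
    and "y \<in> range A"
  shows "\<exists>x. A x = y \<and> norm x \<le> 2 * K * norm y"
proof -
  obtain ys xs where ys_0: "ys 0 = y" and ys_Suc: "\<And>j. ys (Suc j) = ys j - A (xs j)"
    and ys_bound: "\<And>j. norm (ys j) \<le> norm y * (1/2) ^ j"
    and xs_bound: "\<And>j. norm (xs j) \<le> K * norm y * (1/2) ^ j"
    by (rule approx_preimage_iteration[OF assms]) (rule that)
  have geometric: "(\<lambda>j. K * norm y * (1/2) ^ j) sums (K * norm y * 2)"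
    using sums_mult[OF geometric_sums[of "1/2 :: real"], of "K * norm y"] by simp
  have summable_norm_xs: "summable (\<lambda>j. norm (xs j))"
    by (rule summable_comparison_test'[OF sums_summable[OF geometric]]) (simp add: xs_bound)
  define x where "x = suminf xs"
  have "ys \<longlonglongrightarrow> 0"
  proof (rule Lim_null_comparison)
    show "\<forall>\<^sub>F j in sequentially. norm (ys j) \<le> norm y * (1/2) ^ j"
      using ys_bound by simp
    show "(\<lambda>j. norm y * (1/2 :: real) ^ j) \<longlonglongrightarrow> 0"
      by (intro tendsto_mult_right_zero LIMSEQ_power_zero) simp
  qed
  then have "(\<lambda>j. ys j - ys (Suc j)) sums (ys 0 - 0)"
    by (rule telescope_sums')
  then have "(\<lambda>j. A (xs j)) sums y"
    by (simp add: ys_Suc ys_0)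
  moreover have "(\<lambda>j. A (xs j)) sums A x"
    unfolding x_def using summable_norm_cancel_complete[OF summable_norm_xs]
    by (intro bounded_linear.sums[OF blinfun.bounded_linear_right] summable_sums)
  ultimately have "A x = y"
    using sums_unique2 by blast
  moreover have "norm x \<le> 2 * K * norm y"
  proof -
    have "norm x \<le> (\<Sum>j. norm (xs j))"
      unfolding x_def by (rule norm_suminf_le_complete[OF summable_norm_xs])
    also have "\<dots> \<le> (\<Sum>j. K * norm y * (1/2) ^ j)"
      using xs_bound summable_norm_xs sums_summable[OF geometric] by (rule suminf_le)
    finally show ?thesis
      using sums_unique[OF geometric] by simp
  qed
  ultimately show ?thesis
    by blast
qed

lemma closed_range_bounded_preimage:
  fixes A :: "'a::{real_normed_vector,complete_space} \<Rightarrow>\<^sub>L 'b::{real_normed_vector,complete_space}"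
  assumes "closed (range A)"
  obtains C where "C \<ge> 0" "\<And>y. y \<in> range A \<Longrightarrow> \<exists>x. A x = y \<and> norm x \<le> C * norm y"
proof -
  obtain K where "K \<ge> 0" and approx: "\<And>y e. y \<in> range A \<Longrightarrow> e > 0 \<Longrightarrow>
      \<exists>x. norm x \<le> K * norm y \<and> norm (y - A x) < e"
    using closed_range_approx_preimage[OF assms] by blast
  have half: "\<forall>y\<in>range A. \<exists>x. norm x \<le> K * norm y \<and> norm (y - A x) \<le> norm y / 2"
  proof
    fix y assume "y \<in> range A"
    show "\<exists>x. norm x \<le> K * norm y \<and> norm (y - A x) \<le> norm y / 2"
    proof (cases "y = 0")
      case False
      then show ?thesis
        using approx[OF \<open>y \<in> range A\<close>, of "norm y / 2"] by (auto intro: less_imp_le)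
    qed (auto intro: exI[of _ 0])
  qed
  show thesis
  proof (rule that)
    show "2 * K \<ge> 0"
      using \<open>K \<ge> 0\<close> by simp
    show "\<exists>x. A x = y \<and> norm x \<le> 2 * K * norm y" if "y \<in> range A" for y
      using \<open>K \<ge> 0\<close> half that by (rule approx_preimage_imp_preimage)
  qed
qed

lemma closed_range_bounded_below:
  fixes A :: "'a::{real_inner,complete_space} \<Rightarrow>\<^sub>L 'b::{real_normed_vector,complete_space}"
  assumes "closed (range A)"
  obtains C where "C \<ge> 0" "\<And>x. x \<in> {n. A n = 0}\<^sup>\<bottom> \<Longrightarrow> norm x \<le> C * norm (A x)"
proof -
  obtain C where "C \<ge> 0" and C: "\<And>y. y \<in> range A \<Longrightarrow> \<exists>x. A x = y \<and> norm x \<le> C * norm y"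
    using closed_range_bounded_preimage[OF assms] by blast
  have "norm x \<le> C * norm (A x)" if x: "x \<in> {n. A n = 0}\<^sup>\<bottom>" for x
  proof -
    obtain x' where x': "A x' = A x" "norm x' \<le> C * norm (A x)"
      using C[of "A x"] by blast
    have "A (x' - x) = 0"
      using x'(1) by (simp add: blinfun.diff_right)
    then have "inner (x' - x) x = 0"
      using orthogonal_compD[OF x] by simp
    then have "(norm x)\<^sup>2 = inner x' x"
      by (simp add: inner_diff_left power2_norm_eq_inner)
    also have "\<dots> \<le> norm x' * norm x"
      by (rule norm_cauchy_schwarz)
    finally have "(norm x)\<^sup>2 \<le> norm x' * norm x" .
    then have "norm x \<le> norm x'"
      by (cases "x = 0") (simp_all add: power2_eq_square)
    then show ?thesis
      using x'(2) by linarith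
  qed
  with \<open>C \<ge> 0\<close> show thesis
    by (rule that)
qed

section \<open>The Moore-Penrose inverse\<close>

(* mp_solution A y x holds iff x = A\<^sup>\<dagger> y, the minimal-norm least-squares solution of A x = y. *)
definition mp_solution :: "('a::real_inner \<Rightarrow>\<^sub>L 'b::real_inner) \<Rightarrow> 'b \<Rightarrow> 'a \<Rightarrow> bool" where
  "mp_solution A y x \<longleftrightarrow> x \<in> {n. A n = 0}\<^sup>\<bottom> \<and> y - A x \<in> (range A)\<^sup>\<bottom>"

lemma mp_solution_unique:
  assumes "mp_solution A y x1" "mp_solution A y x2"
  shows "x1 = x2"
proof -
  have "A (x1 - x2) = (y - A x2) - (y - A x1)"
    by (simp add: blinfun.diff_right)
  also have "\<dots> \<in> (range A)\<^sup>\<bottom>"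
    using assms subspace_orthogonal_comp unfolding mp_solution_def by (blast intro: subspace_diff)
  finally have "A (x1 - x2) \<in> range A \<inter> (range A)\<^sup>\<bottom>"
    by simp
  then have "x1 - x2 \<in> {n. A n = 0}"
    by (simp add: orthogonal_Int_0[OF subspace_range_blinfun])
  moreover have "x1 - x2 \<in> {n. A n = 0}\<^sup>\<bottom>"
    using assms subspace_orthogonal_comp unfolding mp_solution_def by (blast intro: subspace_diff)
  ultimately have "x1 - x2 \<in> {n. A n = 0} \<inter> {n. A n = 0}\<^sup>\<bottom>"
    by (rule IntI)
  then show ?thesis
    by (simp add: orthogonal_Int_0[OF subspace_kernel_blinfun])
qed

lemma mp_solution_exists:
  fixes A :: "'a::{real_inner,complete_space} \<Rightarrow>\<^sub>L 'b::{real_inner,complete_space}"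
  assumes "closed (range A)"
  shows "\<exists>x. mp_solution A y x"
proof -
  obtain p where "p \<in> range A" and p: "\<And>v. v \<in> range A \<Longrightarrow> inner (y - p) v = 0"
    using assms subspace_range_blinfun by (rule orthogonal_projection_exists[where x = y]) blast
  then obtain u where u: "p = A u"
    by blast
  obtain q where "A q = 0" and q: "\<And>v. A v = 0 \<Longrightarrow> inner (u - q) v = 0"
    using closed_kernel_bounded_linear[OF blinfun.bounded_linear_right] subspace_kernel_blinfun
    by (rule orthogonal_projection_exists[where x = u]) auto
  have "mp_solution A y (u - q)"
    unfolding mp_solution_def orthogonal_comp_def orthogonal_def
    using p q u \<open>A q = 0\<close> by (auto simp: blinfun.diff_right inner_commute)
  then show ?thesis ..
qed

lemma mp_solution_norm_le:
  assumes "mp_solution A y x"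
  shows "norm (A x) \<le> norm y"
proof -
  have "inner (A x) (y - A x) = 0"
    using assms orthogonal_compD[of "y - A x" "range A"] by (simp add: mp_solution_def)
  then have "(norm y)\<^sup>2 = (norm (A x))\<^sup>2 + (norm (y - A x))\<^sup>2"
    using norm_add_Pythagorean[of "A x" "y - A x"] by (simp add: orthogonal_def)
  then have "(norm (A x))\<^sup>2 \<le> (norm y)\<^sup>2"
    by simp
  then show ?thesis
    by (rule power2_le_imp_le) simp
qed

lemma mp_solution_operator:
  fixes A :: "'a::{real_inner,complete_space} \<Rightarrow>\<^sub>L 'b::{real_inner,complete_space}"
  assumes "closed (range A)"
  shows "\<exists>B :: 'b \<Rightarrow>\<^sub>L 'a. \<forall>y. mp_solution A y (B y)"
proof -
  define g where "g y = (THE x. mp_solution A y x)" for y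
  have g: "mp_solution A y (g y)" for y
    unfolding g_def using mp_solution_exists[OF assms] mp_solution_unique by (metis theI)
  have g_eqI: "g y = x" if "mp_solution A y x" for y x
    using g mp_solution_unique that by blast
  have ker_perp: "g y \<in> {n. A n = 0}\<^sup>\<bottom>" and range_perp: "y - A (g y) \<in> (range A)\<^sup>\<bottom>" for y
    using g unfolding mp_solution_def by blast+
  have add: "g (a + b) = g a + g b" for a b
  proof (rule g_eqI)
    have "a + b - A (g a + g b) = (a - A (g a)) + (b - A (g b))"
      by (simp add: blinfun.add_right)
    then show "mp_solution A (a + b) (g a + g b)"
      unfolding mp_solution_def using ker_perp range_perp subspace_orthogonal_comp
      by (metis subspace_add)
  qed
  have scale: "g (r *\<^sub>R a) = r *\<^sub>R g a" for r a
  proof (rule g_eqI)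
    have "r *\<^sub>R a - A (r *\<^sub>R g a) = r *\<^sub>R (a - A (g a))"
      by (simp add: blinfun.scaleR_right scaleR_diff_right)
    then show "mp_solution A (r *\<^sub>R a) (r *\<^sub>R g a)"
      unfolding mp_solution_def using ker_perp range_perp subspace_orthogonal_comp
      by (metis subspace_scale)
  qed
  obtain C where "C \<ge> 0" and C: "\<And>x. x \<in> {n. A n = 0}\<^sup>\<bottom> \<Longrightarrow> norm x \<le> C * norm (A x)"
    using closed_range_bounded_below[OF assms] by blast
  have bound: "norm (g y) \<le> norm y * C" for y
    using order_trans[OF C[OF ker_perp] mult_left_mono[OF mp_solution_norm_le[OF g] \<open>C \<ge> 0\<close>]]
    by (simp add: mult.commute)
  have "blinfun_apply (Blinfun g) = g"
    using bounded_linear_intro[OF add scale bound] by (rule bounded_linear_Blinfun_apply)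
  with g show ?thesis
    by (intro exI[of _ "Blinfun g"]) simp
qed

lemma mp_solution_operator_is_mp_inverse:
  fixes A B :: "'a::{real_inner,complete_space} \<Rightarrow>\<^sub>L 'a"
  assumes B: "\<And>y. mp_solution A y (B y)"
  shows "is_mp_inverse A B"
proof -
  have ker_perp: "B y \<in> {n. A n = 0}\<^sup>\<bottom>" and range_perp: "y - A (B y) \<in> (range A)\<^sup>\<bottom>" for y
    using B unfolding mp_solution_def by blast+
  have ABA: "A (B (A x)) = A x" for x
  proof -
    have "A x - A (B (A x)) \<in> range A \<inter> (range A)\<^sup>\<bottom>"
      using range_perp[of "A x"] by (simp flip: blinfun.diff_right)
    then have "A x - A (B (A x)) = 0"
      by (simp add: orthogonal_Int_0[OF subspace_range_blinfun])
    then show ?thesis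
      by simp
  qed
  have BAB: "B (A (B y)) = B y" for y
  proof (rule mp_solution_unique[OF B])
    show "mp_solution A (A (B y)) (B y)"
      using ker_perp by (simp add: mp_solution_def orthogonal_comp_def orthogonal_def)
  qed
  show ?thesis
    unfolding is_mp_inverse_def
  proof (intro conjI)
    show "A o\<^sub>L B o\<^sub>L A = A" "B o\<^sub>L A o\<^sub>L B = B"
      by (simp_all add: blinfun_eq_iff ABA BAB)
    show "adj (B o\<^sub>L A) = B o\<^sub>L A"
    proof (rule adj_orthogonal_projection)
      fix x y
      have "y - B (A y) \<in> {n. A n = 0}"
        by (simp add: blinfun.diff_right ABA)
      then have "inner (B (A x)) (y - B (A y)) = 0"
        unfolding inner_commute[of "B (A x)"] by (rule orthogonal_compD[OF ker_perp])
      then show "inner ((B o\<^sub>L A) x) y = inner ((B o\<^sub>L A) x) ((B o\<^sub>L A) y)"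
        by (simp add: inner_diff_right)
    qed
    show "adj (A o\<^sub>L B) = A o\<^sub>L B"
    proof (rule adj_orthogonal_projection)
      fix x y
      have "inner (A (B x)) (y - A (B y)) = 0"
        using orthogonal_compD[OF range_perp[of y]] by simp
      then show "inner ((A o\<^sub>L B) x) y = inner ((A o\<^sub>L B) x) ((A o\<^sub>L B) y)"
        by (simp add: inner_diff_right)
    qed
  qed
qed

lemma mp_exists:
  fixes A :: "'a::{real_inner,complete_space} \<Rightarrow>\<^sub>L 'a"
  assumes "closed_range A"
  shows "\<exists>B. is_mp_inverse A B"
  using mp_solution_operator[of A] mp_solution_operator_is_mp_inverse assms
  unfolding closed_range_def by blast

lemma is_mp_inverseD:
  fixes A B :: "'a::{real_inner,complete_space} \<Rightarrow>\<^sub>L 'a"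
  assumes "is_mp_inverse A B"
  shows mp_ABA: "A (B (A x)) = A x"
    and mp_BAB: "B (A (B x)) = B x"
    and mp_AB_selfadjoint: "inner (A (B x)) y = inner x (A (B y))"
    and mp_BA_selfadjoint: "inner (B (A x)) y = inner x (B (A y))"
proof -
  have ABA: "A o\<^sub>L B o\<^sub>L A = A" and BAB: "B o\<^sub>L A o\<^sub>L B = B"
    and AB: "adj (A o\<^sub>L B) = A o\<^sub>L B" and BA: "adj (B o\<^sub>L A) = B o\<^sub>L A"
    using assms by (simp_all add: is_mp_inverse_def)
  show "A (B (A x)) = A x" "B (A (B x)) = B x"
    using ABA BAB by (simp_all add: blinfun_eq_iff)
  show "inner (A (B x)) y = inner x (A (B y))"
    using inner_adj_right[of "A o\<^sub>L B" x y] AB by simp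
  show "inner (B (A x)) y = inner x (B (A y))"
    using inner_adj_right[of "B o\<^sub>L A" x y] BA by simp
qed

lemma mp_inverses_same_projections:
  fixes A B C :: "'a::{real_inner,complete_space} \<Rightarrow>\<^sub>L 'a"
  assumes B: "is_mp_inverse A B" and C: "is_mp_inverse A C"
  shows "A (B y) = A (C y)" and "B (A x) = C (A x)"
proof (rule vector_eq_ldotI)
  fix z
  have "inner z (A (B y)) = inner (A (B z)) y"
    by (rule mp_AB_selfadjoint[OF B, symmetric])
  also have "\<dots> = inner (A (C (A (B z)))) y"
    by (simp only: mp_ABA[OF C])
  also have "\<dots> = inner (A (B z)) (A (C y))"
    by (rule mp_AB_selfadjoint[OF C])
  also have "\<dots> = inner z (A (B (A (C y))))"
    by (rule mp_AB_selfadjoint[OF B])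
  also have "\<dots> = inner z (A (C y))"
    by (simp only: mp_ABA[OF B])
  finally show "inner z (A (B y)) = inner z (A (C y))" .
next
  show "B (A x) = C (A x)"
  proof (rule vector_eq_rdotI)
    fix z
    have "inner (B (A x)) z = inner x (B (A z))"
      by (rule mp_BA_selfadjoint[OF B])
    also have "\<dots> = inner x (B (A (C (A z))))"
      by (simp only: mp_ABA[OF C])
    also have "\<dots> = inner (B (A x)) (C (A z))"
      by (rule mp_BA_selfadjoint[OF B, symmetric])
    also have "\<dots> = inner (C (A (B (A x)))) z"
      by (rule mp_BA_selfadjoint[OF C, symmetric])
    also have "\<dots> = inner (C (A x)) z"
      by (simp only: mp_ABA[OF B])
    finally show "inner (B (A x)) z = inner (C (A x)) z" .
  qed
qed

lemma mp_unique:
  fixes A B C :: "'a::{real_inner,complete_space} \<Rightarrow>\<^sub>L 'a"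
  assumes B: "is_mp_inverse A B" and C: "is_mp_inverse A C"
  shows "B = C"
proof (rule blinfun_eqI)
  fix y
  have "B y = B (A (B y))"
    by (rule mp_BAB[OF B, symmetric])
  also have "\<dots> = C (A (C y))"
    by (simp only: mp_inverses_same_projections[OF B C])
  also have "\<dots> = C y"
    by (rule mp_BAB[OF C])
  finally show "B y = C y" .
qed

lemma is_mp_inverse_mp:
  fixes A :: "'a::{real_inner,complete_space} \<Rightarrow>\<^sub>L 'a"
  assumes "closed_range A"
  shows "is_mp_inverse A (mp A)"
proof -
  obtain B where B: "is_mp_inverse A B"
    using mp_exists[OF assms] by blast
  have "mp A = B"
    unfolding mp_def by (rule the_equality, rule B, rule mp_unique[OF _ B])
  with B show ?thesis
    by simp
qed

lemma adj_mp_inverse: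
  fixes A B :: "'a::{real_inner,complete_space} \<Rightarrow>\<^sub>L 'a"
  assumes "is_mp_inverse A B"
  shows "is_mp_inverse (adj A) (adj B)"
proof -
  have ABA: "A o\<^sub>L B o\<^sub>L A = A" and BAB: "B o\<^sub>L A o\<^sub>L B = B"
    and AB: "adj (A o\<^sub>L B) = A o\<^sub>L B" and BA: "adj (B o\<^sub>L A) = B o\<^sub>L A"
    using assms by (simp_all add: is_mp_inverse_def)
  have "adj A o\<^sub>L adj B o\<^sub>L adj A = adj (A o\<^sub>L B o\<^sub>L A)"
    by (simp add: adj_compose blinfun_compose_assoc)
  moreover have "adj B o\<^sub>L adj A o\<^sub>L adj B = adj (B o\<^sub>L A o\<^sub>L B)"
    by (simp add: adj_compose blinfun_compose_assoc)
  moreover have "adj B o\<^sub>L adj A = A o\<^sub>L B" "adj A o\<^sub>L adj B = B o\<^sub>L A"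
    using AB BA by (simp_all add: adj_compose)
  ultimately show ?thesis
    using ABA BAB AB BA by (simp add: is_mp_inverse_def adj_compose)
qed

lemma mp_adj_AB:
  fixes A B :: "'a::{real_inner,complete_space} \<Rightarrow>\<^sub>L 'a"
  assumes "is_mp_inverse A B"
  shows "adj A (A (B x)) = adj A x"
proof (rule vector_eq_ldotI)
  fix z
  have "inner z (adj A (A (B x))) = inner (A (B (A z))) x"
    by (simp add: mp_AB_selfadjoint[OF assms] flip: inner_adj_right)
  also have "\<dots> = inner z (adj A x)"
    by (simp add: mp_ABA[OF assms] inner_adj_right)
  finally show "inner z (adj A (A (B x))) = inner z (adj A x)" .
qed

lemma mp_BA_adj:
  fixes A B :: "'a::{real_inner,complete_space} \<Rightarrow>\<^sub>L 'a"
  assumes "is_mp_inverse A B"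
  shows "B (A (adj A x)) = adj A x"
proof (rule vector_eq_rdotI)
  fix z
  have "inner (B (A (adj A x))) z = inner x (A (B (A z)))"
    by (simp add: mp_BA_selfadjoint[OF assms] flip: inner_adj_left)
  also have "\<dots> = inner (adj A x) z"
    by (simp add: mp_ABA[OF assms] inner_adj_left)
  finally show "inner (B (A (adj A x))) z = inner (adj A x) z" .
qed

section \<open>EP operators\<close>

lemma kernel_eq_orthogonal_comp_range_adj:
  fixes A :: "'a::{real_inner,complete_space} \<Rightarrow>\<^sub>L 'a"
  shows "{x. A x = 0} = (range (adj A))\<^sup>\<bottom>"
proof -
  have "A x = 0 \<longleftrightarrow> (\<forall>y. inner (adj A y) x = 0)" for x
    by (metis inner_adj_left inner_eq_zero_iff inner_zero_right)
  then show ?thesis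
    by (auto simp: orthogonal_comp_def orthogonal_def)
qed

lemma range_eq_orthogonal_comp_kernel_adj:
  fixes A B :: "'a::{real_inner,complete_space} \<Rightarrow>\<^sub>L 'a"
  assumes "is_mp_inverse A B"
  shows "range A = {x. adj A x = 0}\<^sup>\<bottom>"
proof (intro equalityI subsetI)
  fix y assume "y \<in> range A"
  then show "y \<in> {x. adj A x = 0}\<^sup>\<bottom>"
    by (auto simp: orthogonal_comp_def orthogonal_def simp flip: inner_adj_left)
next
  fix y assume y: "y \<in> {x. adj A x = 0}\<^sup>\<bottom>"
  define d where "d = y - A (B y)"
  have "adj A d = 0"
    by (simp add: d_def blinfun.diff_right mp_adj_AB[OF assms])
  then have "inner d y = 0" and "inner d (A (B y)) = 0"
    using orthogonal_compD[OF y] by (auto simp: inner_adj_left[symmetric])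
  then have "inner d d = 0"
    by (simp add: d_def inner_diff_right)
  then have "y = A (B y)"
    by (simp add: d_def)
  then show "y \<in> range A"
    by (metis rangeI)
qed

lemma EP_iff_kernel_eq_kernel_adj:
  fixes A :: "'a::{real_inner,complete_space} \<Rightarrow>\<^sub>L 'a"
  assumes "closed_range A"
  shows "is_EP A \<longleftrightarrow> {x. A x = 0} = {x. adj A x = 0}"
proof -
  have mp: "is_mp_inverse A (mp A)"
    using assms by (rule is_mp_inverse_mp)
  have "range A = {x. adj A x = 0}\<^sup>\<bottom>" "range (adj A) = {x. A x = 0}\<^sup>\<bottom>"
    using range_eq_orthogonal_comp_kernel_adj[OF mp]
      range_eq_orthogonal_comp_kernel_adj[OF adj_mp_inverse[OF mp]] by simp_all
  moreover have "{x. A x = 0} = (range (adj A))\<^sup>\<bottom>" "{x. adj A x = 0} = (range A)\<^sup>\<bottom>"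
    using kernel_eq_orthogonal_comp_range_adj[of A] kernel_eq_orthogonal_comp_range_adj[of "adj A"]
    by simp_all
  ultimately show ?thesis
    using assms unfolding is_EP_def by metis
qed

lemma kernel_eq_kernel_adj_if_normal:
  fixes A :: "'a::{real_inner,complete_space} \<Rightarrow>\<^sub>L 'a"
  assumes "A o\<^sub>L adj A = adj A o\<^sub>L A"
  shows "{x. A x = 0} = {x. adj A x = 0}"
proof -
  have "inner (A x) (A x) = inner (adj A x) (adj A x)" for x
  proof -
    have "inner (A x) (A x) = inner x (adj A (A x))"
      by (rule inner_adj_right)
    also have "\<dots> = inner x (A (adj A x))"
      using assms by (simp add: blinfun_eq_iff)
    also have "\<dots> = inner (adj A x) (adj A x)"
      by (rule inner_adj_left[symmetric])
    finally show ?thesis .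
  qed
  then show ?thesis
    by (metis (full_types) inner_eq_zero_iff)
qed

section \<open>n-EP operators\<close>

lemma opow_0 [simp]: "opow A 0 = id_blinfun"
  by (simp add: opow_def)

lemma opow_Suc: "opow A (Suc n) = A o\<^sub>L opow A n"
  by (simp add: opow_def)

lemma opow_Suc_apply [simp]: "opow A (Suc n) x = A (opow A n x)"
  by (simp add: opow_Suc)

lemma opow_commute_apply:
  fixes A X :: "'a::real_normed_vector \<Rightarrow>\<^sub>L 'a"
  assumes "\<And>x. A (X x) = X (A x)"
  shows "opow A n (X x) = X (opow A n x)"
  using assms by (induction n) simp_all

lemma opow_Suc_apply_right: "opow A (Suc n) x = opow A n (A x)"
  using opow_commute_apply[of A A] by simp

lemma adj_opow: "adj (opow A n) = opow (adj A) n"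
  for A :: "'a::{real_inner,complete_space} \<Rightarrow>\<^sub>L 'a"
proof (induction n)
  case (Suc n)
  have "adj (opow A (Suc n)) = opow (adj A) n o\<^sub>L adj A"
    by (simp add: opow_Suc adj_compose Suc)
  also have "\<dots> = opow (adj A) (Suc n)"
    by (rule blinfun_eqI) (simp only: blinfun_apply_blinfun_compose opow_Suc_apply_right)
  finally show ?case .
qed simp

lemma power_comm_mp_iff:
  fixes T B :: "'a::{real_inner,complete_space} \<Rightarrow>\<^sub>L 'a"
  assumes mp: "is_mp_inverse T B" and "n \<ge> 1"
  shows "opow T n o\<^sub>L B = B o\<^sub>L opow T n \<longleftrightarrow>
    B o\<^sub>L T o\<^sub>L opow T n = opow T n \<and> opow T n o\<^sub>L T o\<^sub>L B = opow T n"
proof -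
  obtain m where n: "n = Suc m"
    using \<open>n \<ge> 1\<close> by (cases n) auto
  let ?S = "opow T n"
  have ST: "?S (T x) = T (?S x)" for x
    by (rule opow_commute_apply) (rule refl)
  have S_left: "?S x = T (opow T m x)" for x
    by (simp add: n)
  have S_right: "?S x = opow T m (T x)" for x
    by (simp only: n opow_Suc_apply_right)
  have "(\<forall>x. ?S (B x) = B (?S x)) \<longleftrightarrow> (\<forall>x. B (T (?S x)) = ?S x) \<and> (\<forall>x. ?S (T (B x)) = ?S x)"
  proof (intro iffI conjI allI)
    fix x
    assume "\<forall>x. ?S (B x) = B (?S x)"
    then have comm: "?S (B x) = B (?S x)" for x
      by blast
    have "B (T (?S x)) = ?S (B (T x))"
      by (simp only: ST comm)
    also have "\<dots> = ?S x"
      by (simp only: S_right mp_ABA[OF mp])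
    finally show "B (T (?S x)) = ?S x" .
    have "?S (T (B x)) = T (B (?S x))"
      by (simp only: ST comm)
    also have "\<dots> = ?S x"
      by (simp only: S_left mp_ABA[OF mp])
    finally show "?S (T (B x)) = ?S x" .
  next
    fix x
    assume "(\<forall>x. B (T (?S x)) = ?S x) \<and> (\<forall>x. ?S (T (B x)) = ?S x)"
    then have left: "B (T (?S x)) = ?S x" and right: "?S (T (B x)) = ?S x" for x
      by blast+
    have "B (?S x) = B (?S (T (B x)))"
      by (simp only: right)
    also have "\<dots> = ?S (B x)"
      by (simp only: ST left)
    finally show "?S (B x) = B (?S x)"
      by (rule sym)
  qed
  then show ?thesis
    by (simp add: blinfun_eq_iff)
qed

lemma EP_power_imp_power_comm_mp:
  fixes T B :: "'a::{real_inner,complete_space} \<Rightarrow>\<^sub>L 'a"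
  assumes mp: "is_mp_inverse T B" and "n \<ge> 1" and EP: "is_EP (opow T n)"
  shows "opow T n o\<^sub>L B = B o\<^sub>L opow T n"
proof -
  obtain m where n: "n = Suc m"
    using \<open>n \<ge> 1\<close> by (cases n) auto
  let ?S = "opow T n"
  have "B (T (?S x)) = ?S x" for x
  proof -
    have "?S x \<in> range (adj ?S)"
      using EP by (auto simp: is_EP_def)
    then obtain w where "?S x = adj T (opow (adj T) m w)"
      by (auto simp: adj_opow n)
    then show ?thesis
      by (simp add: mp_BA_adj[OF mp])
  qed
  moreover have "?S (T (B x)) = ?S x" for x
  proof -
    have "adj ?S (x - T (B x)) = opow (adj T) m (adj T x - adj T (T (B x)))"
      by (simp only: adj_opow n opow_Suc_apply_right blinfun.diff_right)
    then have "adj ?S (x - T (B x)) = 0"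
      by (simp add: mp_adj_AB[OF mp])
    moreover have "{x. ?S x = 0} = {x. adj ?S x = 0}"
      using EP EP_iff_kernel_eq_kernel_adj unfolding is_EP_def by blast
    ultimately have "?S (x - T (B x)) = 0"
      by blast
    then show ?thesis
      by (simp add: blinfun.diff_right)
  qed
  ultimately show ?thesis
    using power_comm_mp_iff[OF mp \<open>n \<ge> 1\<close>] by (simp add: blinfun_eq_iff)
qed

lemma SD_T_TTadj:
  fixes T B :: "'a::{real_inner,complete_space} \<Rightarrow>\<^sub>L 'a"
  assumes mp: "is_mp_inverse T B" and SD: "adj T o\<^sub>L B = B o\<^sub>L adj T"
  shows "T (T (adj T x)) = T (adj T (T (T (B x))))"
proof -
  have SD': "adj T (B x) = B (adj T x)" for x
    using SD by (simp add: blinfun_eq_iff)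
  have "B (T (T (adj T x))) = adj T (T (T (B x)))"
  proof (rule vector_eq_rdotI)
    fix z
    have "inner (B (T (T (adj T x)))) z = inner (T (adj T x)) (B (T z))"
      by (rule mp_BA_selfadjoint[OF mp])
    also have "\<dots> = inner (adj T x) (adj T (B (T z)))"
      by (rule inner_adj_right)
    also have "\<dots> = inner x (T (adj T (B (T z))))"
      by (rule inner_adj_left)
    also have "\<dots> = inner x (T (B (adj T (T z))))"
      by (simp only: SD')
    also have "\<dots> = inner (T (B x)) (adj T (T z))"
      by (rule mp_AB_selfadjoint[OF mp, symmetric])
    also have "\<dots> = inner (T (T (B x))) (T z)"
      by (rule inner_adj_right[symmetric])
    also have "\<dots> = inner (adj T (T (T (B x)))) z"
      by (rule inner_adj_left[symmetric])
    finally show "inner (B (T (T (adj T x)))) z = inner (adj T (T (T (B x)))) z" .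
  qed
  then show ?thesis
    by (metis mp_ABA[OF mp])
qed

lemma SD_power_TTadj:
  fixes T B :: "'a::{real_inner,complete_space} \<Rightarrow>\<^sub>L 'a"
  assumes mp: "is_mp_inverse T B" and SD: "adj T o\<^sub>L B = B o\<^sub>L adj T"
  shows "opow T (Suc k) (T (adj T x)) = T (adj T (opow T (Suc k) (T (B x))))"
proof (induction k)
  case 0
  then show ?case
    using SD_T_TTadj[OF mp SD] by simp
next
  case (Suc k)
  let ?y = "opow T (Suc k) (T (B x))"
  have y: "T (B ?y) = ?y"
    by (simp add: mp_ABA[OF mp])
  have "opow T (Suc (Suc k)) (T (adj T x)) = T (T (adj T ?y))"
    by (simp only: opow_Suc_apply[of T "Suc k"] Suc)
  also have "\<dots> = T (adj T (T (T (B ?y))))"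
    by (rule SD_T_TTadj[OF mp SD])
  also have "\<dots> = T (adj T (opow T (Suc (Suc k)) (T (B x))))"
    by (simp only: y opow_Suc_apply[of T "Suc k"])
  finally show ?case .
qed

lemma SD_power_comm_mp_imp_power_commute_adj:
  fixes T B :: "'a::{real_inner,complete_space} \<Rightarrow>\<^sub>L 'a"
  assumes mp: "is_mp_inverse T B" and "n \<ge> 1" and SD: "adj T o\<^sub>L B = B o\<^sub>L adj T"
    and nEP: "opow T n o\<^sub>L B = B o\<^sub>L opow T n"
  shows "opow T n o\<^sub>L adj T = adj T o\<^sub>L opow T n"
proof -
  obtain m where n: "n = Suc m"
    using \<open>n \<ge> 1\<close> by (cases n) auto
  let ?S = "opow T n"
  have left: "B (T (?S x)) = ?S x" and right: "?S (T (B x)) = ?S x" for x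
    using nEP power_comm_mp_iff[OF mp \<open>n \<ge> 1\<close>] by (simp_all add: blinfun_eq_iff)
  have S_TTadj: "?S (T (adj T x)) = T (adj T (?S x))" for x
    using SD_power_TTadj[OF mp SD, of m x] right by (simp add: n)
  have "adj T (?S x) = ?S (adj T x)" for x
  proof -
    define d where "d = adj T (?S x) - ?S (adj T x)"
    have "T (?S (adj T x)) = ?S (T (adj T x))"
      by (rule opow_commute_apply[symmetric]) (rule refl)
    then have "T d = 0"
      by (simp add: d_def blinfun.diff_right S_TTadj)
    moreover have "B (T d) = d"
      by (simp add: d_def blinfun.diff_right mp_BA_adj[OF mp] left)
    ultimately show ?thesis
      by (simp add: d_def)
  qed
  then show ?thesis
    by (simp add: blinfun_eq_iff)
qed

lemma SD_power_comm_mp_imp_EP: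
  fixes T B :: "'a::{real_inner,complete_space} \<Rightarrow>\<^sub>L 'a"
  assumes mp: "is_mp_inverse T B" and "n \<ge> 1" and SD: "adj T o\<^sub>L B = B o\<^sub>L adj T"
    and nEP: "opow T n o\<^sub>L B = B o\<^sub>L opow T n" and cr: "closed_range (opow T n)"
  shows "is_EP (opow T n)"
proof -
  have "opow T n (adj T x) = adj T (opow T n x)" for x
    using SD_power_comm_mp_imp_power_commute_adj[OF mp \<open>n \<ge> 1\<close> SD nEP]
    by (simp add: blinfun_eq_iff)
  then have "opow T n o\<^sub>L adj (opow T n) = adj (opow T n) o\<^sub>L opow T n"
    by (simp add: adj_opow blinfun_eq_iff opow_commute_apply)
  then show ?thesis
    using EP_iff_kernel_eq_kernel_adj[OF cr] kernel_eq_kernel_adj_if_normal by blast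
qed

theorem mainTheorem8:
  fixes T :: "'a::{real_inner, complete_space} \<Rightarrow>\<^sub>L 'a" and n :: nat
  assumes "closed_range T" and "n \<ge> 1" and "closed_range (opow T n)"
  shows "(is_EP (opow T n) \<longrightarrow> is_nEP n T) \<and>
         (is_SD T \<longrightarrow> (is_nEP n T \<longleftrightarrow> is_EP (opow T n)))"
proof -
  have mp: "is_mp_inverse T (mp T)"
    using assms(1) by (rule is_mp_inverse_mp)
  have "is_EP (opow T n) \<Longrightarrow> is_nEP n T"
    unfolding is_nEP_def using assms(1) EP_power_imp_power_comm_mp[OF mp assms(2)] by blast
  moreover have "is_SD T \<Longrightarrow> is_nEP n T \<Longrightarrow> is_EP (opow T n)"
    unfolding is_SD_def is_nEP_def using SD_power_comm_mp_imp_EP[OF mp assms(2) _ _ assms(3)] by blast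
  ultimately show ?thesis
    by blast
qed

end
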